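(* Let $n\ge 3$ and let $Q$ be the subposet of the face poset of $\Delta_{n+1}$ consisting of all faces of the form $A(F)$, $B(F)$, $C(F,S)$, $D(F,S)$ with $F$ a face of $\Delta_n$ and $S\in F$. Let $M$ be the matching on $Q$ pairing $A(F)$ with $B(F)$ for every face $F$ of $\Delta_n$, and $C(F,S)$ with $D(F,S)$ for every face $F$ of $\Delta_n$ and $S\in F$. Then $M$ is a Morse matching on $Q$.
   Context: The Whitehouse complex $\Delta_n$ ($n\ge 3$) is the simplicial complex with vertex set $V_n=\{S\subseteq\{2,\dots,n\}: 2\le |S|\le n-2\}$, in which a subset $F\subseteq V_n$ is a face iff for all $S,T\in F$ one has $S\subseteq T$, $T\subseteq S$, or $S\cap T=\emptyset$. (So $\Delta_3=\{\emptyset\}$.) Its face poset is the set of faces (including $\emptyset$) ordered by inclusion, ranked by cardinality. For a face $F$ of $\Delta_n$: $A(F)=F$; $B(F)=F\cup\{\{2,\dots,n\}\}$; for $S\in F$, $C(F,S)=\{T\cup\{n+1\}: T\in F, S\subseteq T\}\cup\{T: T\in F, S\not\subseteq T\}$ and $D(F,S)=C(F,S)\cup\{S\}$. These are faces of $\Delta_{n+1}$. A matching $M$ on a ranked poset is a set of disjoint cover pairs $x\lessdot y$; orienting all cover edges downward except those in $M$, which are oriented upward, $M$ is a Morse matching if the resulting directed graph is acyclic. *)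

theory Defs
  imports Main
begin

definition wh_vertices :: "nat \<Rightarrow> nat set set" where
  "wh_vertices n = {S. S \<subseteq> {2..n} \<and> 2 \<le> card S \<and> card S \<le> n - 2}"

(* F is a face of Delta_n (the empty face included) *)
definition wh_face :: "nat \<Rightarrow> nat set set \<Rightarrow> bool" where
  "wh_face n F \<longleftrightarrow> F \<subseteq> wh_vertices n \<and>
     (\<forall>S\<in>F. \<forall>T\<in>F. S \<subseteq> T \<or> T \<subseteq> S \<or> S \<inter> T = {})"

definition wh_A :: "nat set set \<Rightarrow> nat set set" where
  "wh_A F = F"

definition wh_B :: "nat \<Rightarrow> nat set set \<Rightarrow> nat set set" where
  "wh_B n F = insert {2..n} F"

definition wh_C :: "nat \<Rightarrow> nat set set \<Rightarrow> nat set \<Rightarrow> nat set set" where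
  "wh_C n F S = {insert (n+1) T | T. T \<in> F \<and> S \<subseteq> T} \<union> {T. T \<in> F \<and> \<not> S \<subseteq> T}"

definition wh_D :: "nat \<Rightarrow> nat set set \<Rightarrow> nat set \<Rightarrow> nat set set" where
  "wh_D n F S = insert S (wh_C n F S)"

definition wh_Q :: "nat \<Rightarrow> nat set set set" where
  "wh_Q n = {wh_A F | F. wh_face n F} \<union> {wh_B n F | F. wh_face n F}
          \<union> {wh_C n F S | F S. wh_face n F \<and> S \<in> F}
          \<union> {wh_D n F S | F S. wh_face n F \<and> S \<in> F}"

definition wh_M :: "nat \<Rightarrow> (nat set set \<times> nat set set) set" where
  "wh_M n = {(wh_A F, wh_B n F) | F. wh_face n F}
          \<union> {(wh_C n F S, wh_D n F S) | F S. wh_face n F \<and> S \<in> F}"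

definition covers_in :: "'a set set \<Rightarrow> 'a set \<Rightarrow> 'a set \<Rightarrow> bool" where
  "covers_in P x y \<longleftrightarrow> x \<in> P \<and> y \<in> P \<and> x \<subset> y \<and> \<not> (\<exists>z\<in>P. x \<subset> z \<and> z \<subset> y)"

definition is_matching :: "'a set set \<Rightarrow> ('a set \<times> 'a set) set \<Rightarrow> bool" where
  "is_matching P M \<longleftrightarrow> (\<forall>(x,y)\<in>M. covers_in P x y) \<and>
     (\<forall>(x,y)\<in>M. \<forall>(x',y')\<in>M. (x,y) \<noteq> (x',y') \<longrightarrow> {x,y} \<inter> {x',y'} = {})"

(* Hasse diagram with cover edges oriented downward, except matched ones upward *)
definition morse_digraph :: "'a set set \<Rightarrow> ('a set \<times> 'a set) set \<Rightarrow> ('a set \<times> 'a set) set" where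
  "morse_digraph P M = {(y,x). covers_in P x y \<and> (x,y) \<notin> M} \<union> {(x,y). covers_in P x y \<and> (x,y) \<in> M}"

definition morse_matching :: "'a set set \<Rightarrow> ('a set \<times> 'a set) set \<Rightarrow> bool" where
  "morse_matching P M \<longleftrightarrow> is_matching P M \<and> acyclic (morse_digraph P M)"

end

theory Submission
  imports Defs "HOL-Library.Product_Lexorder"
begin

(* Each matched pair (A F, B F) or (C F S, D F S) differs by a single vertex, the pivot: {2..n}
   for the first kind and S for the second. An element of Q is the top of its pair iff it contains
   {2..n} or two vertices T and T + {n+1}; from the marked members (those containing n+1) the
   pivot is recovered as their intersection minus n+1. Acyclicity follows from a potential,
   ordered lexicographically, that decreases along every edge of the modified Hasse diagram:
   the size of the bottom of the pair, then unmarked before marked, then a larger intersection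
   of the marked members first, and finally the top of a pair before its bottom. *)

lemma acyclic_if_decreasing:
  fixes f :: "'a \<Rightarrow> 'b::preorder"
  assumes "\<And>x y. (x, y) \<in> r \<Longrightarrow> f y < f x"
  shows "acyclic r"
proof -
  have "f y < f x" if "(x, y) \<in> r\<^sup>+" for x y
    using that by (induction rule: trancl_induct) (auto dest: assms intro: less_trans)
  then show ?thesis
    unfolding acyclic_def by (meson less_irrefl)
qed

lemma morse_matchingI:
  fixes f :: "'a set \<Rightarrow> 'b::preorder"
  assumes "is_matching P M"
    and "\<And>x y. covers_in P x y \<Longrightarrow> (x, y) \<notin> M \<Longrightarrow> f x < f y"
    and "\<And>x y. (x, y) \<in> M \<Longrightarrow> f y < f x"
  shows "morse_matching P M"
  unfolding morse_matching_def morse_digraph_def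
  using assms by (auto intro!: acyclic_if_decreasing[of _ f])

lemma covers_in_insert:
  "x \<in> P \<Longrightarrow> insert z x \<in> P \<Longrightarrow> z \<notin> x \<Longrightarrow> covers_in P x (insert z x)"
  unfolding covers_in_def by auto

lemma psubset_card_Suc_obtain:
  assumes "finite y" "x \<subset> y" "card y = Suc (card x)"
  obtains z where "z \<notin> x" "y = insert z x"
proof -
  have "finite x"
    using assms(1,2) finite_subset by blast
  then have "card (y - x) = 1"
    using assms by (simp add: card_Diff_subset)
  then obtain z where "y - x = {z}"
    by (auto simp: card_1_singleton_iff)
  with assms(2) show thesis
    using that by blast
qed

definition wh_top :: "nat \<Rightarrow> nat set set \<Rightarrow> bool" where
  "wh_top n X \<longleftrightarrow> {2..n} \<in> X \<or> (\<exists>Y\<in>X. n + 1 \<notin> Y \<and> insert (n + 1) Y \<in> X)"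

definition wh_marked :: "nat \<Rightarrow> nat set set \<Rightarrow> bool" where
  "wh_marked n X \<longleftrightarrow> (\<exists>Y\<in>X. n + 1 \<in> Y)"

definition wh_core :: "nat \<Rightarrow> nat set set \<Rightarrow> nat set" where
  "wh_core n X = \<Inter>{Y\<in>X. n + 1 \<in> Y}"

definition wh_pivot :: "nat \<Rightarrow> nat set set \<Rightarrow> nat set" where
  "wh_pivot n X = (if wh_marked n X then wh_core n X - {n + 1} else {2..n})"

definition wh_potential :: "nat \<Rightarrow> nat set set \<Rightarrow> int \<times> bool \<times> int \<times> bool" where
  "wh_potential n X =
     (int (card X) - of_bool (wh_top n X), wh_marked n X, - int (card (wh_core n X)), \<not> wh_top n X)"

lemma wh_marked_mono: "X \<subseteq> Y \<Longrightarrow> wh_marked n X \<Longrightarrow> wh_marked n Y"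
  unfolding wh_marked_def by blast

lemma wh_core_antimono: "X \<subseteq> Y \<Longrightarrow> wh_core n Y \<subseteq> wh_core n X"
  unfolding wh_core_def by blast

lemma wh_face_finite: "wh_face n F \<Longrightarrow> finite F"
  unfolding wh_face_def wh_vertices_def
  by (rule finite_subset[of _ "Pow {2..n}"]) auto

lemma wh_face_memberD:
  assumes "wh_face n F" "T \<in> F"
  shows "finite T" "n + 1 \<notin> T" "T \<noteq> {2..n}"
proof -
  have T: "T \<subseteq> {2..n}" "2 \<le> card T" "card T \<le> n - 2"
    using assms unfolding wh_face_def wh_vertices_def by auto
  then show "finite T" "n + 1 \<notin> T"
    by (auto intro: finite_subset)
  show "T \<noteq> {2..n}"
    using T by auto
qed

lemma wh_A_simps:
  assumes "wh_face n F"
  shows "\<not> wh_top n F" "\<not> wh_marked n F" "wh_pivot n F = {2..n}" "{2..n} \<notin> F"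
  using wh_face_memberD[OF assms]
  unfolding wh_top_def wh_marked_def wh_pivot_def by auto

lemma wh_B_simps:
  assumes "wh_face n F"
  shows "wh_top n (wh_B n F)" "\<not> wh_marked n (wh_B n F)" "wh_pivot n (wh_B n F) = {2..n}"
    "wh_core n (wh_B n F) = wh_core n F"
  using wh_face_memberD[OF assms]
  unfolding wh_top_def wh_marked_def wh_pivot_def wh_core_def wh_B_def by auto

lemma wh_C_simps:
  assumes "wh_face n F" "S \<in> F"
  shows "insert (n + 1) S \<in> wh_C n F S" "S \<notin> wh_C n F S" "wh_marked n (wh_C n F S)"
    "wh_core n (wh_C n F S) = insert (n + 1) S" "wh_pivot n (wh_C n F S) = S"
proof -
  note notin = wh_face_memberD(2)[OF assms(1)]
  show S_in: "insert (n + 1) S \<in> wh_C n F S"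
    using assms(2) unfolding wh_C_def by auto
  have "insert (n + 1) S \<subseteq> Y" if "Y \<in> wh_C n F S" "n + 1 \<in> Y" for Y
    using that notin unfolding wh_C_def by auto
  with S_in show core: "wh_core n (wh_C n F S) = insert (n + 1) S"
    unfolding wh_core_def by blast
  show "S \<notin> wh_C n F S" "wh_marked n (wh_C n F S)"
    using S_in notin[OF assms(2)] unfolding wh_C_def wh_marked_def by auto
  then show "wh_pivot n (wh_C n F S) = S"
    using core notin[OF assms(2)] unfolding wh_pivot_def by simp
qed

lemma wh_C_not_top:
  assumes "wh_face n F" "S \<in> F"
  shows "\<not> wh_top n (wh_C n F S)"
proof
  note notin = wh_face_memberD(2)[OF assms(1)]
  assume "wh_top n (wh_C n F S)"
  then consider "{2..n} \<in> wh_C n F S"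
    | Y where "Y \<in> wh_C n F S" "n + 1 \<notin> Y" "insert (n + 1) Y \<in> wh_C n F S"
    unfolding wh_top_def by blast
  then show False
  proof cases
    case 1
    then show False
      using wh_face_memberD(3)[OF assms(1)] unfolding wh_C_def by (auto dest: equalityD2)
  next
    case 2
    then have Y: "Y \<in> F" "\<not> S \<subseteq> Y"
      unfolding wh_C_def by auto
    from 2(3) obtain T where "T \<in> F" "S \<subseteq> T" "insert (n + 1) Y = insert (n + 1) T"
      using notin unfolding wh_C_def by auto
    then have "Y = T"
      using notin Y(1) 2(2) by (metis insert_ident)
    with Y \<open>S \<subseteq> T\<close> show False by simp
  qed
qed

lemma wh_D_simps:
  assumes "wh_face n F" "S \<in> F"
  shows "wh_top n (wh_D n F S)" "wh_marked n (wh_D n F S)"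
    "wh_core n (wh_D n F S) = insert (n + 1) S" "wh_pivot n (wh_D n F S) = S"
proof -
  note C = wh_C_simps[OF assms] and notin = wh_face_memberD(2)[OF assms]
  show "wh_top n (wh_D n F S)"
    using C(1) notin unfolding wh_top_def wh_D_def by auto
  have "wh_core n (wh_D n F S) = wh_core n (wh_C n F S)"
    using notin unfolding wh_core_def wh_D_def by auto
  with C(4) show core: "wh_core n (wh_D n F S) = insert (n + 1) S"
    by simp
  show marked: "wh_marked n (wh_D n F S)"
    using C(3) unfolding wh_marked_def wh_D_def by auto
  show "wh_pivot n (wh_D n F S) = S"
    using marked core notin unfolding wh_pivot_def by simp
qed

lemma wh_D_subset: "wh_C n F S \<subseteq> wh_D n F S"
  unfolding wh_D_def by blast

lemma wh_Q_cases:
  assumes "X \<in> wh_Q n"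
  obtains F where "wh_face n F" "X = F"
  | F where "wh_face n F" "X = wh_B n F"
  | F S where "wh_face n F" "S \<in> F" "X = wh_C n F S"
  | F S where "wh_face n F" "S \<in> F" "X = wh_D n F S"
  using assms unfolding wh_Q_def wh_A_def by blast

lemma wh_M_cases:
  assumes "p \<in> wh_M n"
  obtains F where "wh_face n F" "p = (F, wh_B n F)"
  | F S where "wh_face n F" "S \<in> F" "p = (wh_C n F S, wh_D n F S)"
  using assms unfolding wh_M_def wh_A_def by blast

lemma wh_Q_finite: "X \<in> wh_Q n \<Longrightarrow> finite X"
  by (erule wh_Q_cases) (auto simp: wh_face_finite wh_B_def wh_C_def wh_D_def)

lemma wh_Q_marked:
  assumes "X \<in> wh_Q n" "wh_marked n X"
  shows "wh_core n X = insert (n + 1) (wh_pivot n X)" "wh_core n X \<in> X"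
    "finite (wh_core n X)" "n + 1 \<notin> wh_pivot n X"
proof -
  from assms obtain F S where FS: "wh_face n F" "S \<in> F" "X = wh_C n F S \<or> X = wh_D n F S"
    by (auto elim!: wh_Q_cases simp: wh_A_simps wh_B_simps)
  then have "wh_pivot n X = S" "wh_core n X = insert (n + 1) S"
    using wh_C_simps wh_D_simps by auto
  moreover have "insert (n + 1) S \<in> X"
    using FS wh_C_simps(1) wh_D_subset by blast
  ultimately show "wh_core n X = insert (n + 1) (wh_pivot n X)" "wh_core n X \<in> X"
    "finite (wh_core n X)" "n + 1 \<notin> wh_pivot n X"
    using wh_face_memberD[OF FS(1,2)] by auto
qed

lemma wh_M_pair:
  assumes "(x, y) \<in> wh_M n"
  shows "x \<in> wh_Q n" "y \<in> wh_Q n" "y = insert (wh_pivot n x) x" "wh_pivot n x \<notin> x"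
    "wh_pivot n y = wh_pivot n x" "\<not> wh_top n x" "wh_top n y"
    "wh_marked n y = wh_marked n x" "wh_core n y = wh_core n x"
proof -
  show "x \<in> wh_Q n" "y \<in> wh_Q n"
    using assms by (auto elim!: wh_M_cases simp: wh_Q_def wh_A_def)
  show "y = insert (wh_pivot n x) x" "wh_pivot n x \<notin> x"
    using assms
    by (auto elim!: wh_M_cases simp: wh_B_def wh_D_def wh_A_simps wh_C_simps)
  show "wh_pivot n y = wh_pivot n x" "\<not> wh_top n x" "wh_top n y"
    "wh_marked n y = wh_marked n x" "wh_core n y = wh_core n x"
    using assms
    by (auto elim!: wh_M_cases simp: wh_A_simps wh_B_simps wh_C_simps wh_C_not_top wh_D_simps)
qed

lemma wh_M_bottom_eq: "(x, y) \<in> wh_M n \<Longrightarrow> x = y - {wh_pivot n y}"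
  using wh_M_pair[of x y n] by auto

lemma wh_M_of_top:
  assumes "y \<in> wh_Q n" "wh_top n y"
  shows "(y - {wh_pivot n y}, y) \<in> wh_M n"
  using assms(1)
proof (cases rule: wh_Q_cases)
  case (2 F)
  then have "(F, y) \<in> wh_M n"
    unfolding wh_M_def wh_A_def by blast
  then show ?thesis
    using wh_M_bottom_eq by metis
next
  case (4 F S)
  then have "(wh_C n F S, y) \<in> wh_M n"
    unfolding wh_M_def by blast
  then show ?thesis
    using wh_M_bottom_eq by metis
qed (use assms(2) wh_A_simps wh_C_not_top in auto)

lemma is_matching_wh_M: "is_matching (wh_Q n) (wh_M n)"
proof -
  have "covers_in (wh_Q n) x y" if "(x, y) \<in> wh_M n" for x y
    using wh_M_pair(1-4)[OF that] covers_in_insert by metis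
  moreover have "{x, y} \<inter> {x', y'} = {}"
    if "(x, y) \<in> wh_M n" "(x', y') \<in> wh_M n" "(x, y) \<noteq> (x', y')" for x y x' y'
  proof -
    note p = wh_M_pair[OF that(1)] and p' = wh_M_pair[OF that(2)]
    have "x \<noteq> x'" "y \<noteq> y'"
      using p(3) p'(3) wh_M_bottom_eq[OF that(1)] wh_M_bottom_eq[OF that(2)] that(3) by auto
    moreover have "x \<noteq> y'" "y \<noteq> x'"
      using p(6,7) p'(6,7) by auto
    ultimately show ?thesis by auto
  qed
  ultimately show ?thesis
    unfolding is_matching_def by fast
qed

lemma wh_potential_matched:
  assumes "(x, y) \<in> wh_M n"
  shows "wh_potential n y < wh_potential n x"
proof -
  note p = wh_M_pair[OF assms]
  have "card y = Suc (card x)"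
    using p(3,4) wh_Q_finite[OF p(1)] by simp
  then show ?thesis
    using p(6-9) unfolding wh_potential_def by (simp add: less_prod_def)
qed

(* Unmatched covers that preserve the first two components of the potential: the added vertex
   is forced to be the marked member of the top, so the core shrinks. *)
lemma wh_core_card_less:
  assumes "x \<in> wh_Q n" "y \<in> wh_Q n" "y = insert z x" "z \<notin> x" "(x, y) \<notin> wh_M n"
    and "\<not> wh_top n x" "wh_top n y" "wh_marked n x = wh_marked n y"
  shows "card (wh_core n y) < card (wh_core n x)"
proof -
  have y_pair: "(y - {wh_pivot n y}, y) \<in> wh_M n"
    using wh_M_of_top[OF assms(2,7)] .
  then have "z \<noteq> wh_pivot n y"
    using assms(3-5) by auto
  moreover have "wh_pivot n y \<in> y"
    using wh_M_pair(3,5)[OF y_pair] by auto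
  ultimately have pivot_in: "wh_pivot n y \<in> x"
    using assms(3) by blast
  have marked: "wh_marked n y"
  proof (rule ccontr)
    assume "\<not> wh_marked n y"
    then have "{2..n} \<in> x"
      using pivot_in unfolding wh_pivot_def by simp
    with assms(6) show False
      unfolding wh_top_def by blast
  qed
  note Y = wh_Q_marked[OF assms(2) marked] and X = wh_Q_marked[OF assms(1)]
  have "z = wh_core n y"
  proof (rule ccontr)
    assume "z \<noteq> wh_core n y"
    then have "insert (n + 1) (wh_pivot n y) \<in> x"
      using Y(1,2) assms(3) by auto
    with pivot_in Y(4) assms(6) show False
      unfolding wh_top_def by blast
  qed
  then have "wh_core n y \<noteq> wh_core n x"
    using X(2) marked assms(4,8) by auto
  moreover have "wh_core n y \<subseteq> wh_core n x"
    using assms(3) by (simp add: wh_core_antimono subset_insertI)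
  ultimately show ?thesis
    using X(3) marked assms(8) by (simp add: psubset_card_mono)
qed

lemma wh_potential_unmatched_cover:
  assumes cover: "covers_in (wh_Q n) x y" and unmatched: "(x, y) \<notin> wh_M n"
  shows "wh_potential n x < wh_potential n y"
proof -
  from cover have xQ: "x \<in> wh_Q n" and yQ: "y \<in> wh_Q n" and sub: "x \<subset> y"
    unfolding covers_in_def by auto
  have fin: "finite y"
    using wh_Q_finite[OF yQ] .
  have "card x < card y"
    using psubset_card_mono[OF fin sub] .
  then consider "Suc (card x) < card y" | "card y = Suc (card x)"
    by linarith
  then show ?thesis
  proof cases
    case 1
    then show ?thesis
      unfolding wh_potential_def by (simp add: less_prod_def)
  next
    case 2
    then obtain z where z: "z \<notin> x" "y = insert z x"
      using psubset_card_Suc_obtain[OF fin sub] by blast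
    show ?thesis
    proof (cases "\<not> wh_top n x \<and> wh_top n y \<and> wh_marked n x = wh_marked n y")
      case True
      then show ?thesis
        using wh_core_card_less[OF xQ yQ z(2,1) unmatched] 2
        unfolding wh_potential_def by (simp add: less_prod_def)
    next
      case False
      then show ?thesis
        using 2 wh_marked_mono[OF psubset_imp_subset[OF sub]]
        unfolding wh_potential_def by (auto simp: less_prod_def)
    qed
  qed
qed

theorem mainTheorem10:
  fixes n :: nat
  assumes "n \<ge> 3"
  shows "morse_matching (wh_Q n) (wh_M n)"
  using is_matching_wh_M wh_potential_unmatched_cover wh_potential_matched
  by (rule morse_matchingI)

end
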